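(* Let $f:\{0,1\}^n\to\{0,1\}$ be a read-once DNF formula with $m$ terms, each containing exactly $n/m$ variables (so every variable occurs in exactly one term). Under unit costs ($c_i=1$ for all $i$) and an arbitrary probability vector $p\in(0,1)^n$, there is a non-adaptive strategy $S$ with $$\mathrm{cost}_{c,p}(f,S)\le m\cdot \mathsf{OPT}_{\mathcal A}(f,c,p).$$
   Context: Stochastic Boolean Function Evaluation (SBFE) setup: $f:\{0,1\}^n\to\{0,1\}$ is a known Boolean function, $c\in\mathbb{R}_{>0}^n$ a cost vector and $p\in(0,1)^n$ a probability vector. The unknown input $x\in\{0,1\}^n$ is random with independent coordinates and $\Pr(x_i=1)=p_i$. The value $x_i$ can only be learned by testing variable $i$, at cost $c_i$. A strategy tests variables sequentially until $f(x)$ is determined, i.e. until $f(x')=f(x)$ for every $x'$ agreeing with $x$ on all tested coordinates. An adaptive strategy is a decision tree (the next test may depend on previous outcomes); a non-adaptive strategy is a fixed permutation of $[n]$, with variables tested in that order until $f(x)$ is determined. $\mathrm{cost}_{c,p}(f,S)$ is the expected total cost of tests performed by $S$ for random $x$. $\mathsf{OPT}_{\mathcal A}(f,c,p)$ (resp. $\mathsf{OPT}_{\mathcal N}(f,c,p)$) is the minimum of $\mathrm{cost}_{c,p}(f,S)$ over all adaptive (resp. non-adaptive) strategies. A DNF formula is a disjunction of terms, each a conjunction of literals; it is read-once if no variable is negated and distinct terms contain disjoint sets of variables. *)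

theory Defs
  imports Complex_Main
begin

text \<open>Inputs in {0,1}^n are modelled as functions nat => bool that are False outside {0..<n}.\<close>
definition Inputs :: "nat \<Rightarrow> (nat \<Rightarrow> bool) set" where
  "Inputs n = {x. \<forall>i\<ge>n. x i = False}"

definition prob_in :: "nat \<Rightarrow> (nat \<Rightarrow> real) \<Rightarrow> (nat \<Rightarrow> bool) \<Rightarrow> real" where
  "prob_in n p x = (\<Prod>i<n. if x i then p i else 1 - p i)"

definition determined :: "((nat \<Rightarrow> bool) \<Rightarrow> bool) \<Rightarrow> nat \<Rightarrow> nat set \<Rightarrow> (nat \<Rightarrow> bool) \<Rightarrow> bool" where
  "determined f n S x = (\<forall>x'\<in>Inputs n. (\<forall>i\<in>S. x' i = x i) \<longrightarrow> f x' = f x)"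

text \<open>Adaptive strategies: decision trees. Node i l r tests variable i and continues
  with l if x_i = 0 and with r if x_i = 1.\<close>
datatype dtree = Leaf | Node nat dtree dtree

fun tested :: "dtree \<Rightarrow> (nat \<Rightarrow> bool) \<Rightarrow> nat set" where
  "tested Leaf x = {}"
| "tested (Node i l r) x = insert i (tested (if x i then r else l) x)"

fun tree_cost :: "(nat \<Rightarrow> real) \<Rightarrow> dtree \<Rightarrow> (nat \<Rightarrow> bool) \<Rightarrow> real" where
  "tree_cost c Leaf x = 0"
| "tree_cost c (Node i l r) x = c i + tree_cost c (if x i then r else l) x"

definition valid_tree :: "((nat \<Rightarrow> bool) \<Rightarrow> bool) \<Rightarrow> nat \<Rightarrow> dtree \<Rightarrow> bool" where
  "valid_tree f n t = (\<forall>x\<in>Inputs n. tested t x \<subseteq> {..<n} \<and> determined f n (tested t x) x)"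

definition cost_adaptive ::
  "((nat \<Rightarrow> bool) \<Rightarrow> bool) \<Rightarrow> nat \<Rightarrow> (nat \<Rightarrow> real) \<Rightarrow> (nat \<Rightarrow> real) \<Rightarrow> dtree \<Rightarrow> real" where
  "cost_adaptive f n c p t = (\<Sum>x\<in>Inputs n. prob_in n p x * tree_cost c t x)"

definition OPT_A :: "((nat \<Rightarrow> bool) \<Rightarrow> bool) \<Rightarrow> nat \<Rightarrow> (nat \<Rightarrow> real) \<Rightarrow> (nat \<Rightarrow> real) \<Rightarrow> real" where
  "OPT_A f n c p = Inf {cost_adaptive f n c p t | t. valid_tree f n t}"

text \<open>Non-adaptive strategies: permutations of [n] (as distinct lists), tested in order until
  f(x) is determined.\<close>
definition is_perm :: "nat \<Rightarrow> nat list \<Rightarrow> bool" where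
  "is_perm n \<sigma> = (distinct \<sigma> \<and> set \<sigma> = {..<n})"

definition stop_index :: "((nat \<Rightarrow> bool) \<Rightarrow> bool) \<Rightarrow> nat \<Rightarrow> nat list \<Rightarrow> (nat \<Rightarrow> bool) \<Rightarrow> nat" where
  "stop_index f n \<sigma> x = (LEAST k. determined f n (set (take k \<sigma>)) x)"

definition cost_nonadaptive ::
  "((nat \<Rightarrow> bool) \<Rightarrow> bool) \<Rightarrow> nat \<Rightarrow> (nat \<Rightarrow> real) \<Rightarrow> (nat \<Rightarrow> real) \<Rightarrow> nat list \<Rightarrow> real" where
  "cost_nonadaptive f n c p \<sigma> =
     (\<Sum>x\<in>Inputs n. prob_in n p x * sum_list (map c (take (stop_index f n \<sigma> x) \<sigma>)))"

text \<open>Read-once DNF with terms T 0, ..., T (m-1) (monotone, pairwise disjoint, covering [n]).\<close>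
definition read_once_dnf :: "nat \<Rightarrow> (nat \<Rightarrow> nat set) \<Rightarrow> (nat \<Rightarrow> bool) \<Rightarrow> bool" where
  "read_once_dnf m T x = (\<exists>j<m. \<forall>i\<in>T j. x i)"

end

theory Submission
  imports Defs
begin

text \<open>Charge each term the number of its variables tested up to and including the first one
  that falsifies it (its full size if none does). A valid decision tree tests at least as many
  variables as it charges any term, so its cost dominates the number of rounds \<open>r < k\<close> after
  which some term is still unsettled, i.e. charged more than \<open>r\<close>. By induction over the tree,
  the probability that all terms are settled after \<open>r\<close> rounds is at most the product over the
  terms of the probability that testing their variables in increasing order of \<open>p\<close> falsifies
  them within \<open>r\<close> tests; the terms are independent, and for a single term testing a least
  likely variable first is optimal. The round-robin schedule, which in every round tests the
  next variable of each term in this order, attains the bound and stops after \<open>m * r\<close> tests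
  once all terms are settled after \<open>r\<close> rounds. Hence its cost is at most \<open>m\<close> times the
  expected number of unsettled rounds, which is at most \<open>m * OPT_A\<close>.\<close>

section \<open>Expectation over independent inputs\<close>

definition expect :: "nat \<Rightarrow> (nat \<Rightarrow> real) \<Rightarrow> ((nat \<Rightarrow> bool) \<Rightarrow> real) \<Rightarrow> real" where
  "expect n p F = (\<Sum>x\<in>Inputs n. prob_in n p x * F x)"

lemma Inputs_Suc: "Inputs (Suc n) = (\<lambda>(x, b). x(n := b)) ` (Inputs n \<times> UNIV)"
proof
  show "(\<lambda>(x, b). x(n := b)) ` (Inputs n \<times> UNIV) \<subseteq> Inputs (Suc n)"
    by (auto simp: Inputs_def)
  show "Inputs (Suc n) \<subseteq> (\<lambda>(x, b). x(n := b)) ` (Inputs n \<times> UNIV)"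
  proof
    fix y assume "y \<in> Inputs (Suc n)"
    then have "(y(n := False), y n) \<in> Inputs n \<times> UNIV"
      by (auto simp: Inputs_def)
    moreover have "y = (\<lambda>(x, b). x(n := b)) (y(n := False), y n)"
      by simp
    ultimately show "y \<in> (\<lambda>(x, b). x(n := b)) ` (Inputs n \<times> UNIV)"
      by blast
  qed
qed

lemma inj_on_Inputs_upd: "inj_on (\<lambda>(x, b). x(n := b)) (Inputs n \<times> UNIV)"
proof (rule inj_onI, clarify)
  fix x b x' b' assume "x \<in> Inputs n" "x' \<in> Inputs n" and eq: "x(n := b) = x'(n := b')"
  then have "x i = x' i" for i
  proof (cases "i = n")
    case False
    then show ?thesis
      using fun_cong[OF eq, of i] by simp
  qed (auto simp: Inputs_def)
  then show "x = x' \<and> b = b'"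
    using fun_cong[OF eq, of n] by auto
qed

lemma sum_prob_in: "(\<Sum>x\<in>Inputs n. prob_in n p x) = 1"
proof (induction n)
  case 0
  have "Inputs 0 = {\<lambda>_. False}"
    by (auto simp: Inputs_def)
  then show ?case
    by (simp add: prob_in_def)
next
  case (Suc n)
  have upd: "prob_in (Suc n) p (x(n := b)) = prob_in n p x * (if b then p n else 1 - p n)"
    if "x \<in> Inputs n" for x b
    using that by (simp add: prob_in_def prod.lessThan_Suc)
  have "(\<Sum>x\<in>Inputs (Suc n). prob_in (Suc n) p x)
      = (\<Sum>x\<in>Inputs n. \<Sum>b\<in>UNIV. prob_in (Suc n) p (x(n := b)))"
    unfolding Inputs_Suc sum.reindex[OF inj_on_Inputs_upd]
    by (simp add: sum.cartesian_product case_prod_unfold)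
  also have "\<dots> = (\<Sum>x\<in>Inputs n. prob_in n p x)"
    by (intro sum.cong) (auto simp: upd UNIV_bool algebra_simps)
  finally show ?case
    using Suc by simp
qed

lemma prob_in_nonneg: "(\<And>i. i < n \<Longrightarrow> 0 \<le> p i \<and> p i \<le> 1) \<Longrightarrow> 0 \<le> prob_in n p x"
  unfolding prob_in_def by (auto intro!: prod_nonneg)

text \<open>Conditioning on \<open>x i\<close> is expressed by pinning \<open>p i\<close> to \<open>1\<close> or \<open>0\<close>.\<close>
lemma expect_if_var:
  assumes "i < n"
  shows "expect n p (\<lambda>x. if x i then F x else G x)
       = p i * expect n (p(i := 1)) F + (1 - p i) * expect n (p(i := 0)) G"
proof -
  let ?rest = "\<lambda>q x. \<Prod>l\<in>{..<n} - {i}. if x l then q l else 1 - q l"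
  have prob_in_remove: "prob_in n q x = (if x i then q i else 1 - q i) * ?rest q x" for q x
    unfolding prob_in_def using assms by (subst prod.remove[of _ i]) auto
  have rest_upd: "?rest (p(i := c)) x = ?rest p x" for c x
    by (rule prod.cong) auto
  have "prob_in n p x * (if x i then F x else G x)
      = p i * (prob_in n (p(i := 1)) x * F x) + (1 - p i) * (prob_in n (p(i := 0)) x * G x)" for x
    by (simp add: prob_in_remove rest_upd)
  then show ?thesis
    unfolding expect_def by (simp add: sum.distrib sum_distrib_left)
qed

lemma expect_const [simp]: "expect n p (\<lambda>x. c) = c"
  unfolding expect_def by (simp add: sum_distrib_right[symmetric] sum_prob_in)

lemma expect_cmult: "expect n p (\<lambda>x. c * F x) = c * expect n p F"
  unfolding expect_def by (simp add: sum_distrib_left algebra_simps)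

lemma expect_diff: "expect n p (\<lambda>x. F x - G x) = expect n p F - expect n p G"
  unfolding expect_def by (simp add: sum_subtractf algebra_simps)

lemma expect_sum: "expect n p (\<lambda>x. \<Sum>r\<in>K. F r x) = (\<Sum>r\<in>K. expect n p (F r))"
  unfolding expect_def by (simp add: sum_distrib_left sum.swap[of _ K])

lemma expect_cong: "(\<And>x. x \<in> Inputs n \<Longrightarrow> F x = G x) \<Longrightarrow> expect n p F = expect n p G"
  unfolding expect_def by (auto intro!: sum.cong)

lemma expect_mono:
  "(\<And>i. i < n \<Longrightarrow> 0 \<le> p i \<and> p i \<le> 1) \<Longrightarrow> (\<And>x. x \<in> Inputs n \<Longrightarrow> F x \<le> G x)
    \<Longrightarrow> expect n p F \<le> expect n p G"
  unfolding expect_def by (intro sum_mono mult_left_mono) (auto intro: prob_in_nonneg)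

section \<open>Least products of probabilities\<close>

definition min_prod :: "(nat \<Rightarrow> real) \<Rightarrow> nat set \<Rightarrow> nat \<Rightarrow> real" where
  "min_prod p B b = Min ((\<lambda>S. \<Prod>l\<in>S. p l) ` {S. S \<subseteq> B \<and> card S = b})"

lemma finite_subsets_card: "finite B \<Longrightarrow> finite {S. S \<subseteq> B \<and> card S = b}"
  by (rule finite_subset[of _ "Pow B"]) auto

lemma min_prod_attained:
  assumes "finite B" "b \<le> card B"
  obtains S where "S \<subseteq> B" "card S = b" "min_prod p B b = (\<Prod>l\<in>S. p l)"
proof -
  obtain S0 where "S0 \<subseteq> B" "card S0 = b"
    using obtain_subset_with_card_n[OF assms(2)] by blast
  then have "min_prod p B b \<in> (\<lambda>S. \<Prod>l\<in>S. p l) ` {S. S \<subseteq> B \<and> card S = b}"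
    unfolding min_prod_def using finite_subsets_card[OF assms(1)] by (intro Min_in) auto
  then show ?thesis
    using that by blast
qed

lemma min_prod_le: "finite B \<Longrightarrow> S \<subseteq> B \<Longrightarrow> card S = b \<Longrightarrow> min_prod p B b \<le> (\<Prod>l\<in>S. p l)"
  unfolding min_prod_def using finite_subsets_card by (intro Min_le) auto

lemma min_prod_0 [simp]: "finite B \<Longrightarrow> min_prod p B 0 = 1"
proof -
  assume "finite B"
  then have "{S. S \<subseteq> B \<and> card S = 0} = {{}}"
    by (auto simp: card_eq_0_iff dest: finite_subset)
  then show ?thesis
    unfolding min_prod_def by simp
qed

lemma min_prod_cong: "(\<And>l. l \<in> B \<Longrightarrow> p l = q l) \<Longrightarrow> min_prod p B b = min_prod q B b"
  unfolding min_prod_def by (intro arg_cong[where f = Min] image_cong refl prod.cong) auto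

lemma min_prod_bounds:
  assumes "finite B" "b \<le> card B" "\<And>l. l \<in> B \<Longrightarrow> 0 \<le> p l \<and> p l \<le> 1"
  shows "0 \<le> min_prod p B b \<and> min_prod p B b \<le> 1"
proof -
  obtain S where "S \<subseteq> B" "min_prod p B b = (\<Prod>l\<in>S. p l)"
    using min_prod_attained[OF assms(1,2)] by metis
  then show ?thesis
    using assms(3) by (auto intro: prod_nonneg prod_le_1)
qed

lemma min_prod_le_insert:
  assumes "finite B" "i \<in> B" "0 < b" "b \<le> card B"
  shows "min_prod p B b \<le> p i * min_prod p (B - {i}) (b - 1)"
proof -
  have "b - 1 \<le> card (B - {i})"
    using assms by simp
  then obtain S where S: "S \<subseteq> B - {i}" "card S = b - 1"
    "min_prod p (B - {i}) (b - 1) = (\<Prod>l\<in>S. p l)"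
    using min_prod_attained[of "B - {i}" "b - 1" p] assms(1) by blast
  have "finite S" "i \<notin> S"
    using S(1) assms(1) finite_subset by blast+
  then have "insert i S \<subseteq> B" "card (insert i S) = b"
    using S(1,2) assms by auto
  then have "min_prod p B b \<le> (\<Prod>l\<in>insert i S. p l)"
    using assms(1) min_prod_le by blast
  also have "\<dots> = p i * (\<Prod>l\<in>S. p l)"
    using \<open>finite S\<close> \<open>i \<notin> S\<close> by simp
  finally show ?thesis
    using S(3) by simp
qed

text \<open>Exchange argument: replacing an element \<open>s\<close> of an optimal set by the least likely \<open>i\<close>
  does not increase the product.\<close>
lemma insert_le_min_prod:
  assumes "finite B" "i \<in> B" "0 < b" "b \<le> card B"
    and least: "\<And>l. l \<in> B \<Longrightarrow> p i \<le> p l" and nonneg: "\<And>l. l \<in> B \<Longrightarrow> 0 \<le> p l"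
  shows "p i * min_prod p (B - {i}) (b - 1) \<le> min_prod p B b"
proof -
  obtain S where S: "S \<subseteq> B" "card S = b" "min_prod p B b = (\<Prod>l\<in>S. p l)"
    using min_prod_attained[OF assms(1,4)] by metis
  have "finite S"
    using S(1) assms(1) finite_subset by blast
  moreover have "S \<noteq> {}"
    using S(2) assms(3) by auto
  ultimately obtain s where s: "s \<in> S" "i \<in> S \<Longrightarrow> s = i"
    by blast
  have "S - {s} \<subseteq> B - {i}" "card (S - {s}) = b - 1"
    using S(1,2) s \<open>finite S\<close> by auto
  then have "min_prod p (B - {i}) (b - 1) \<le> (\<Prod>l\<in>S - {s}. p l)"
    using assms(1) by (intro min_prod_le) auto
  then have "p i * min_prod p (B - {i}) (b - 1) \<le> p i * (\<Prod>l\<in>S - {s}. p l)"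
    using nonneg assms(2) by (intro mult_left_mono) auto
  also have "\<dots> \<le> p s * (\<Prod>l\<in>S - {s}. p l)"
    using least nonneg s S(1) by (intro mult_right_mono prod_nonneg) auto
  also have "\<dots> = min_prod p B b"
    using s \<open>finite S\<close> S(3) by (simp add: prod.remove)
  finally show ?thesis .
qed

text \<open>\<open>settle_bound r p B d\<close> bounds the probability that a term with untested variables \<open>B\<close>,
  \<open>d\<close> of whose variables have already been tested, is falsified or exhausted within \<open>r\<close> of its
  tests; it is attained by testing \<open>B\<close> in increasing order of \<open>p\<close>.\<close>
definition settle_bound :: "nat \<Rightarrow> (nat \<Rightarrow> real) \<Rightarrow> nat set \<Rightarrow> nat \<Rightarrow> real" where
  "settle_bound r p B d =
     (if r < d then 0 else if d + card B \<le> r then 1 else 1 - min_prod p B (r - d))"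

lemma settle_bound_bounds:
  assumes "finite B" "\<And>l. l \<in> B \<Longrightarrow> 0 \<le> p l \<and> p l \<le> 1"
  shows "0 \<le> settle_bound r p B d \<and> settle_bound r p B d \<le> 1"
  using min_prod_bounds[OF assms(1) _ assms(2), of "r - d"] unfolding settle_bound_def by auto

lemma settle_bound_cong:
  "(\<And>l. l \<in> B \<Longrightarrow> p l = q l) \<Longrightarrow> settle_bound r p B d = settle_bound r q B d"
  by (simp add: settle_bound_def min_prod_cong[of B p q])

lemma settle_bound_empty [simp]: "settle_bound r p {} d = of_bool (d \<le> r)"
  by (simp add: settle_bound_def)

text \<open>Testing \<open>i \<in> B\<close> next: with probability \<open>p i\<close> the term survives one more test,
  otherwise it is falsified after \<open>Suc d\<close> tests. The error term vanishes when \<open>i\<close> has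
  the least probability in \<open>B\<close>.\<close>
lemma settle_bound_step:
  assumes "finite B" "i \<in> B"
  shows "p i * settle_bound r p (B - {i}) (Suc d) + (1 - p i) * of_bool (Suc d \<le> r)
       = settle_bound r p B d
         + (if d < r \<and> r < d + card B
            then min_prod p B (r - d) - p i * min_prod p (B - {i}) (r - d - 1) else 0)"
proof -
  have card: "card (B - {i}) = card B - 1" "card B \<ge> 1"
    using assms by (auto simp: card_gt_0_iff Suc_le_eq)
  consider "r < d" | "d + card B \<le> r" | "d = r" | "d < r" "r < d + card B"
    by linarith
  then show ?thesis
  proof cases
    case 4
    then have "r - d - 1 = r - Suc d"
      by simp
    with 4 card show ?thesis
      by (simp add: settle_bound_def algebra_simps)
  qed (use card assms in \<open>auto simp: settle_bound_def\<close>)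
qed

lemma settle_bound_step_le:
  assumes "finite B" "i \<in> B"
  shows "p i * settle_bound r p (B - {i}) (Suc d) + (1 - p i) * of_bool (Suc d \<le> r)
       \<le> settle_bound r p B d"
proof -
  have "min_prod p B (r - d) \<le> p i * min_prod p (B - {i}) (r - d - 1)" if "d < r" "r < d + card B"
    using min_prod_le_insert[OF assms, of "r - d" p] that by (simp add: less_diff_conv2)
  then show ?thesis
    using settle_bound_step[OF assms, of p r d] by (simp split: if_splits)
qed

lemma settle_bound_step_least:
  assumes "finite B" "i \<in> B"
    and "\<And>l. l \<in> B \<Longrightarrow> p i \<le> p l" "\<And>l. l \<in> B \<Longrightarrow> 0 \<le> p l"
  shows "p i * settle_bound r p (B - {i}) (Suc d) + (1 - p i) * of_bool (Suc d \<le> r)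
       = settle_bound r p B d"
proof -
  have "min_prod p B (r - d) = p i * min_prod p (B - {i}) (r - d - 1)" if "d < r" "r < d + card B"
  proof -
    have "0 < r - d" "r - d \<le> card B"
      using that by linarith+
    then show ?thesis
      using min_prod_le_insert[OF assms(1,2)] insert_le_min_prod[OF assms(1,2)] assms(3,4)
      by (meson antisym)
  qed
  then show ?thesis
    using settle_bound_step[OF assms(1,2), of p r d] by (simp split: if_splits)
qed

section \<open>Settled terms\<close>

lemma prod_of_bool: "finite A \<Longrightarrow> (\<Prod>x\<in>A. of_bool (P x) :: real) = of_bool (\<forall>x\<in>A. P x)"
  by (induction A rule: finite_induct) auto

text \<open>Number of tests of variables of the term \<open>A\<close> that \<open>t\<close> makes on \<open>x\<close> up to and including
  the first one falsifying \<open>A\<close>; a term that is never falsified is charged its full size.\<close>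
fun term_time :: "nat set \<Rightarrow> dtree \<Rightarrow> (nat \<Rightarrow> bool) \<Rightarrow> nat" where
  "term_time A Leaf x = card A"
| "term_time A (Node i l r) x =
     (if i \<in> A then (if x i then Suc (term_time (A - {i}) r x) else 1)
      else term_time A (if x i then r else l) x)"

lemma term_time_empty [simp]: "term_time {} t x = 0"
  by (induction t) auto

definition settled :: "nat \<Rightarrow> nat \<Rightarrow> (nat \<Rightarrow> nat set) \<Rightarrow> (nat \<Rightarrow> nat) \<Rightarrow> dtree \<Rightarrow> (nat \<Rightarrow> bool) \<Rightarrow> bool"
  where "settled m r A d t x = (\<forall>j<m. d j + term_time (A j) t x \<le> r)"

definition settle_prob :: "nat \<Rightarrow> nat \<Rightarrow> (nat \<Rightarrow> real) \<Rightarrow> (nat \<Rightarrow> nat set) \<Rightarrow> (nat \<Rightarrow> nat) \<Rightarrow> real"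
  where "settle_prob m r p A d = (\<Prod>j<m. settle_bound r p (A j) (d j))"

lemma settle_prob_nonneg:
  assumes "\<And>j. j < m \<Longrightarrow> finite (A j) \<and> (\<forall>l\<in>A j. 0 \<le> p l \<and> p l \<le> 1)"
  shows "0 \<le> settle_prob m r p A d"
  unfolding settle_prob_def
proof (rule prod_nonneg)
  fix j assume "j \<in> {..<m}"
  then show "0 \<le> settle_bound r p (A j) (d j)"
    using assms[of j] settle_bound_bounds[of "A j" p] by auto
qed

lemma settle_prob_upd_out:
  "(\<And>j. j < m \<Longrightarrow> i \<notin> A j) \<Longrightarrow> settle_prob m r (p(i := c)) A d = settle_prob m r p A d"
  unfolding settle_prob_def by (intro prod.cong refl settle_bound_cong) auto

lemma settle_prob_Node_in_factor:
  fixes r :: nat and p :: "nat \<Rightarrow> real" and d :: "nat \<Rightarrow> nat" and c :: real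
  assumes j: "j < m" "i \<in> A j" and others: "\<And>j'. j' < m \<Longrightarrow> j' \<noteq> j \<Longrightarrow> i \<notin> A j'"
  defines "R \<equiv> \<Prod>j'\<in>{..<m} - {j}. settle_bound r p (A j') (d j')"
  shows "settle_prob m r p A d = settle_bound r p (A j) (d j) * R"
    and "p i * settle_prob m r (p(i := 1)) (A(j := A j - {i})) (d(j := Suc (d j)))
         + (1 - p i) * c * settle_prob m r (p(i := 0)) (A(j := {})) (d(j := 0))
       = (p i * settle_bound r p (A j - {i}) (Suc (d j)) + (1 - p i) * c) * R"
proof -
  have split: "settle_prob m r q A' d' = settle_bound r q (A' j) (d' j)
      * (\<Prod>j'\<in>{..<m} - {j}. settle_bound r q (A' j') (d' j'))" for q A' d'
    unfolding settle_prob_def using j(1) by (subst prod.remove[of _ j]) auto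
  have rest: "(\<Prod>j'\<in>{..<m} - {j}. settle_bound r (p(i := c')) ((A(j := X)) j') ((d(j := e)) j')) = R"
    for c' X e
    unfolding R_def by (intro prod.cong refl) (auto intro!: settle_bound_cong dest: others)
  show "settle_prob m r p A d = settle_bound r p (A j) (d j) * R"
    unfolding split R_def ..
  have "settle_bound r (p(i := 1)) (A j - {i}) (Suc (d j)) = settle_bound r p (A j - {i}) (Suc (d j))"
    by (rule settle_bound_cong) auto
  then show "p i * settle_prob m r (p(i := 1)) (A(j := A j - {i})) (d(j := Suc (d j)))
         + (1 - p i) * c * settle_prob m r (p(i := 0)) (A(j := {})) (d(j := 0))
       = (p i * settle_bound r p (A j - {i}) (Suc (d j)) + (1 - p i) * c) * R"
    unfolding split rest by (simp add: algebra_simps)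
qed

lemma settle_prob_Node_in_le:
  assumes j: "j < m" "i \<in> A j" and others: "\<And>j'. j' < m \<Longrightarrow> j' \<noteq> j \<Longrightarrow> i \<notin> A j'"
    and prob: "\<And>j. j < m \<Longrightarrow> finite (A j) \<and> (\<forall>l\<in>A j. 0 \<le> p l \<and> p l \<le> 1)"
  shows "p i * settle_prob m r (p(i := 1)) (A(j := A j - {i})) (d(j := Suc (d j)))
         + (1 - p i) * of_bool (Suc (d j) \<le> r) * settle_prob m r (p(i := 0)) (A(j := {})) (d(j := 0))
       \<le> settle_prob m r p A d"
proof -
  define R where "R = (\<Prod>j'\<in>{..<m} - {j}. settle_bound r p (A j') (d j'))"
  have "0 \<le> R"
    unfolding R_def using prob settle_bound_bounds by (intro prod_nonneg) blast
  have "p i * settle_prob m r (p(i := 1)) (A(j := A j - {i})) (d(j := Suc (d j)))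
         + (1 - p i) * of_bool (Suc (d j) \<le> r) * settle_prob m r (p(i := 0)) (A(j := {})) (d(j := 0))
      = (p i * settle_bound r p (A j - {i}) (Suc (d j)) + (1 - p i) * of_bool (Suc (d j) \<le> r)) * R"
    unfolding R_def by (rule settle_prob_Node_in_factor(2)[where A = A, OF j others])
  also have "\<dots> \<le> settle_bound r p (A j) (d j) * R"
    using settle_bound_step_le[OF conjunct1[OF prob[OF j(1)]] j(2)] \<open>0 \<le> R\<close> by (rule mult_right_mono)
  also have "\<dots> = settle_prob m r p A d"
    unfolding R_def by (rule settle_prob_Node_in_factor(1)[where A = A, OF j others, symmetric])
  finally show ?thesis .
qed

lemma settle_prob_Node_in_least:
  assumes j: "j < m" "i \<in> A j" and others: "\<And>j'. j' < m \<Longrightarrow> j' \<noteq> j \<Longrightarrow> i \<notin> A j'"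
    and "finite (A j)" "\<And>l. l \<in> A j \<Longrightarrow> p i \<le> p l" "\<And>l. l \<in> A j \<Longrightarrow> 0 \<le> p l"
  shows "p i * settle_prob m r (p(i := 1)) (A(j := A j - {i})) (d(j := Suc (d j)))
         + (1 - p i) * of_bool (Suc (d j) \<le> r) * settle_prob m r (p(i := 0)) (A(j := {})) (d(j := 0))
       = settle_prob m r p A d"
proof -
  have "p i * settle_prob m r (p(i := 1)) (A(j := A j - {i})) (d(j := Suc (d j)))
         + (1 - p i) * of_bool (Suc (d j) \<le> r) * settle_prob m r (p(i := 0)) (A(j := {})) (d(j := 0))
      = (p i * settle_bound r p (A j - {i}) (Suc (d j)) + (1 - p i) * of_bool (Suc (d j) \<le> r))
        * (\<Prod>j'\<in>{..<m} - {j}. settle_bound r p (A j') (d j'))"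
    by (rule settle_prob_Node_in_factor(2)[where A = A, OF j others])
  also have "\<dots> = settle_prob m r p A d"
    using settle_bound_step_least[where p = p, OF assms(4) j(2) assms(5,6)]
      settle_prob_Node_in_factor(1)[where A = A, OF j others] by simp
  finally show ?thesis .
qed

lemma expect_settled_Node_out:
  assumes "i < n" "\<And>j. j < m \<Longrightarrow> i \<notin> A j"
  shows "expect n p (\<lambda>x. of_bool (settled m r A d (Node i l rt) x))
       = p i * expect n (p(i := 1)) (\<lambda>x. of_bool (settled m r A d rt x))
         + (1 - p i) * expect n (p(i := 0)) (\<lambda>x. of_bool (settled m r A d l x))"
proof -
  have "of_bool (settled m r A d (Node i l rt) x)
      = (if x i then of_bool (settled m r A d rt x) else of_bool (settled m r A d l x) :: real)" for x
    using assms(2) by (simp add: settled_def)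
  then show ?thesis
    by (simp add: expect_if_var[OF assms(1)])
qed

text \<open>A positive test moves one variable of term \<open>j\<close> to the tested ones; a negative test
  settles term \<open>j\<close> after \<open>Suc (d j)\<close> tests and removes it from further consideration.\<close>
lemma expect_settled_Node_in:
  assumes "i < n" "j < m" "i \<in> A j" and others: "\<And>j'. j' < m \<Longrightarrow> j' \<noteq> j \<Longrightarrow> i \<notin> A j'"
  shows "expect n p (\<lambda>x. of_bool (settled m r A d (Node i l rt) x))
       = p i * expect n (p(i := 1)) (\<lambda>x. of_bool (settled m r (A(j := A j - {i})) (d(j := Suc (d j))) rt x))
         + (1 - p i) * of_bool (Suc (d j) \<le> r)
           * expect n (p(i := 0)) (\<lambda>x. of_bool (settled m r (A(j := {})) (d(j := 0)) l x))"
proof -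
  have other: "term_time (A j') (Node i l rt) x = term_time (A j') (if x i then rt else l) x"
    if "j' < m" "j' \<noteq> j" for j' x
    using others[OF that] by simp
  have pos: "settled m r A d (Node i l rt) x
      = settled m r (A(j := A j - {i})) (d(j := Suc (d j))) rt x" if "x i" for x
  proof -
    have "d j' + term_time (A j') (Node i l rt) x \<le> r
        \<longleftrightarrow> (d(j := Suc (d j))) j' + term_time ((A(j := A j - {i})) j') rt x \<le> r"
      if "j' < m" for j'
      using other[OF that] assms(3) \<open>x i\<close> by (cases "j' = j") auto
    then show ?thesis
      unfolding settled_def by blast
  qed
  have neg: "settled m r A d (Node i l rt) x
      = (Suc (d j) \<le> r \<and> settled m r (A(j := {})) (d(j := 0)) l x)" if "\<not> x i" for x
  proof -
    have "d j' + term_time (A j') (Node i l rt) x \<le> r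
        \<longleftrightarrow> (d(j := 0)) j' + term_time ((A(j := {})) j') l x \<le> r"
      if "j' < m" "j' \<noteq> j" for j'
      using other[OF that] \<open>\<not> x i\<close> that(2) by simp
    moreover have "d j + term_time (A j) (Node i l rt) x = Suc (d j)"
      using assms(3) \<open>\<not> x i\<close> by simp
    ultimately show ?thesis
      unfolding settled_def using assms(2) by (metis fun_upd_same term_time_empty add_0 le0)
  qed
  have "of_bool (settled m r A d (Node i l rt) x)
      = (if x i then of_bool (settled m r (A(j := A j - {i})) (d(j := Suc (d j))) rt x)
         else of_bool (Suc (d j) \<le> r) * of_bool (settled m r (A(j := {})) (d(j := 0)) l x) :: real)"
    for x
    using pos neg by simp
  then show ?thesis
    by (simp only: expect_if_var[OF assms(1)] expect_cmult mult.assoc)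
qed

lemma expect_settled_le:
  assumes "\<And>i. i < n \<Longrightarrow> 0 \<le> p i \<and> p i \<le> 1"
    and "\<And>j. j < m \<Longrightarrow> finite (A j) \<and> A j \<subseteq> {..<n}"
    and "\<And>j j'. j < m \<Longrightarrow> j' < m \<Longrightarrow> j \<noteq> j' \<Longrightarrow> A j \<inter> A j' = {}"
  shows "expect n p (\<lambda>x. of_bool (settled m r A d t x)) \<le> settle_prob m r p A d"
  using assms
proof (induction t arbitrary: p A d)
  case Leaf
  have nonneg: "0 \<le> settle_prob m r p A d"
    using Leaf.prems(1,2) by (intro settle_prob_nonneg) blast
  show ?case
  proof (cases "\<forall>j<m. d j + card (A j) \<le> r")
    case True
    then have "settle_prob m r p A d = 1"
      unfolding settle_prob_def by (intro prod.neutral) (auto simp: settle_bound_def)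
    then show ?thesis
      using True by (simp add: settled_def)
  next
    case False
    then have "\<not> settled m r A d Leaf x" for x
      by (auto simp: settled_def)
    then show ?thesis
      using nonneg by simp
  qed
next
  case (Node i l rt)
  have prems_upd:
    "\<And>i'. i' < n \<Longrightarrow> 0 \<le> (p(i := c)) i' \<and> (p(i := c)) i' \<le> 1"
    "\<And>j. j < m \<Longrightarrow> finite (A' j) \<and> A' j \<subseteq> {..<n}"
    "\<And>j j'. j < m \<Longrightarrow> j' < m \<Longrightarrow> j \<noteq> j' \<Longrightarrow> A' j \<inter> A' j' = {}"
    if "c = 0 \<or> c = 1" "\<And>j. A' j \<subseteq> A j" for c :: real and A'
  proof -
    show "0 \<le> (p(i := c)) i' \<and> (p(i := c)) i' \<le> 1" if "i' < n" for i'
      using Node.prems(1)[OF that] \<open>c = 0 \<or> c = 1\<close> by auto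
    show "finite (A' j) \<and> A' j \<subseteq> {..<n}" if "j < m" for j
      using Node.prems(2)[OF that] \<open>\<And>j. A' j \<subseteq> A j\<close>[of j] by (meson finite_subset subset_trans)
    show "A' j \<inter> A' j' = {}" if "j < m" "j' < m" "j \<noteq> j'" for j j'
      using Node.prems(3)[OF that] \<open>\<And>j. A' j \<subseteq> A j\<close> by blast
  qed
  show ?case
  proof (cases "\<exists>j<m. i \<in> A j")
    case True
    then obtain j where j: "j < m" "i \<in> A j"
      by blast
    have others: "\<And>j'. j' < m \<Longrightarrow> j' \<noteq> j \<Longrightarrow> i \<notin> A j'"
      using Node.prems(3) j by blast
    have "i < n"
      using Node.prems(2) j by blast
    then have p_i: "0 \<le> p i" "p i \<le> 1"
      using Node.prems(1) by auto
    have IH1: "expect n (p(i := 1)) (\<lambda>x. of_bool (settled m r (A(j := A j - {i})) (d(j := Suc (d j))) rt x))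
        \<le> settle_prob m r (p(i := 1)) (A(j := A j - {i})) (d(j := Suc (d j)))"
      by (rule Node.IH(2); rule prems_upd) auto
    have IH0: "expect n (p(i := 0)) (\<lambda>x. of_bool (settled m r (A(j := {})) (d(j := 0)) l x))
        \<le> settle_prob m r (p(i := 0)) (A(j := {})) (d(j := 0))"
      by (rule Node.IH(1); rule prems_upd) auto
    have "expect n p (\<lambda>x. of_bool (settled m r A d (Node i l rt) x))
        = p i * expect n (p(i := 1)) (\<lambda>x. of_bool (settled m r (A(j := A j - {i})) (d(j := Suc (d j))) rt x))
          + (1 - p i) * of_bool (Suc (d j) \<le> r)
            * expect n (p(i := 0)) (\<lambda>x. of_bool (settled m r (A(j := {})) (d(j := 0)) l x))"
      by (rule expect_settled_Node_in[where A = A, OF \<open>i < n\<close> j others])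
    also have "\<dots> \<le> p i * settle_prob m r (p(i := 1)) (A(j := A j - {i})) (d(j := Suc (d j)))
          + (1 - p i) * of_bool (Suc (d j) \<le> r) * settle_prob m r (p(i := 0)) (A(j := {})) (d(j := 0))"
      using IH1 IH0 p_i by (intro add_mono mult_left_mono) auto
    also have "\<dots> \<le> settle_prob m r p A d"
    proof (rule settle_prob_Node_in_le[where A = A, OF j others])
      fix j' assume "j' < m"
      then show "finite (A j') \<and> (\<forall>l\<in>A j'. 0 \<le> p l \<and> p l \<le> 1)"
        using Node.prems(1) Node.prems(2)[of j'] by auto
    qed
    finally show ?thesis .
  next
    case False
    then have out: "\<And>j. j < m \<Longrightarrow> i \<notin> A j"
      by blast
    show ?thesis
    proof (cases "i < n")
      case True
      have "expect n p (\<lambda>x. of_bool (settled m r A d (Node i l rt) x))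
          = p i * expect n (p(i := 1)) (\<lambda>x. of_bool (settled m r A d rt x))
            + (1 - p i) * expect n (p(i := 0)) (\<lambda>x. of_bool (settled m r A d l x))"
        by (rule expect_settled_Node_out[OF True out])
      also have "\<dots> \<le> p i * settle_prob m r (p(i := 1)) A d + (1 - p i) * settle_prob m r (p(i := 0)) A d"
      proof -
        have "expect n (p(i := 1)) (\<lambda>x. of_bool (settled m r A d rt x)) \<le> settle_prob m r (p(i := 1)) A d"
          by (rule Node.IH(2); rule prems_upd) auto
        moreover have "expect n (p(i := 0)) (\<lambda>x. of_bool (settled m r A d l x)) \<le> settle_prob m r (p(i := 0)) A d"
          by (rule Node.IH(1); rule prems_upd) auto
        ultimately show ?thesis
          using Node.prems(1)[OF True] by (intro add_mono mult_left_mono) auto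
      qed
      also have "\<dots> = settle_prob m r p A d"
        by (simp add: settle_prob_upd_out[OF out] algebra_simps)
      finally show ?thesis .
    next
      case False
      then have "expect n p (\<lambda>x. of_bool (settled m r A d (Node i l rt) x))
          = expect n p (\<lambda>x. of_bool (settled m r A d l x))"
        using out by (intro expect_cong) (simp add: settled_def Inputs_def)
      then show ?thesis
        using Node.IH(1)[OF Node.prems] by simp
    qed
  qed
qed

section \<open>Strategies testing terms in increasing order of probability\<close>

text \<open>A non-adaptive strategy, as a decision tree that ignores the test outcomes.\<close>
fun chain :: "nat list \<Rightarrow> dtree" where
  "chain [] = Leaf"
| "chain (a # L) = Node a (chain L) (chain L)"

lemma tested_chain [simp]: "tested (chain L) x = set L"
  by (induction L) auto

lemma sorted_filter_Cons_upd:
  assumes "sorted_wrt (\<lambda>u v. p u \<le> p v) (filter P (a # L))" "a \<notin> set L" "\<And>u. Q u \<Longrightarrow> P u"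
  shows "sorted_wrt (\<lambda>u v. (p(a := c)) u \<le> (p(a := c)) v) (filter Q L)"
proof -
  have "sorted_wrt (\<lambda>u v. p u \<le> p v) (filter P L)"
    using assms(1) by (cases "P a") auto
  then have "sorted_wrt (\<lambda>u v. p u \<le> p v) (filter Q (filter P L))"
    by (rule sorted_wrt_filter)
  moreover have "filter Q (filter P L) = filter Q L"
    using assms(3) by (auto intro: filter_cong)
  ultimately show ?thesis
    using assms(2) by (auto intro: sorted_wrt_mono_rel[rotated])
qed

lemma expect_settled_chain:
  assumes "\<And>i. i < n \<Longrightarrow> 0 \<le> p i \<and> p i \<le> 1"
    and "\<And>j. j < m \<Longrightarrow> A j \<subseteq> set L" "set L \<subseteq> {..<n}" "distinct L"
    and "\<And>j j'. j < m \<Longrightarrow> j' < m \<Longrightarrow> j \<noteq> j' \<Longrightarrow> A j \<inter> A j' = {}"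
    and "\<And>j. j < m \<Longrightarrow> sorted_wrt (\<lambda>u v. p u \<le> p v) (filter (\<lambda>u. u \<in> A j) L)"
  shows "expect n p (\<lambda>x. of_bool (settled m r A d (chain L) x)) = settle_prob m r p A d"
  using assms
proof (induction L arbitrary: p A d)
  case Nil
  then have "settle_prob m r p A d = (\<Prod>j<m. of_bool (d j \<le> r))"
    unfolding settle_prob_def by (intro prod.cong) auto
  then show ?case
    using Nil.prems(2) by (auto simp: prod_of_bool settled_def)
next
  case (Cons a L)
  have "a < n" "a \<notin> set L"
    using Cons.prems(3,4) by auto
  have finite_A: "finite (A j)" if "j < m" for j
    using Cons.prems(2)[OF that] finite_subset by blast
  have IH: "expect n (p(a := c)) (\<lambda>x. of_bool (settled m r A' d' (chain L) x))
      = settle_prob m r (p(a := c)) A' d'"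
    if "c = 0 \<or> c = 1" "\<And>j. j < m \<Longrightarrow> A' j \<subseteq> A j - {a}" for c :: real and A' d'
  proof (rule Cons.IH)
    show "0 \<le> (p(a := c)) i \<and> (p(a := c)) i \<le> 1" if "i < n" for i
      using Cons.prems(1)[OF that] \<open>c = 0 \<or> c = 1\<close> by auto
    show "A' j \<subseteq> set L" if "j < m" for j
      using Cons.prems(2)[OF that] \<open>\<And>j. j < m \<Longrightarrow> A' j \<subseteq> A j - {a}\<close>[OF that] by auto
    show "A' j \<inter> A' j' = {}" if "j < m" "j' < m" "j \<noteq> j'" for j j'
      using Cons.prems(5)[OF that] \<open>\<And>j. j < m \<Longrightarrow> A' j \<subseteq> A j - {a}\<close> that by blast
    show "sorted_wrt (\<lambda>u v. (p(a := c)) u \<le> (p(a := c)) v) (filter (\<lambda>u. u \<in> A' j) L)"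
      if "j < m" for j
      using Cons.prems(6)[OF that] \<open>a \<notin> set L\<close>
    proof (rule sorted_filter_Cons_upd)
      show "u \<in> A j" if "u \<in> A' j" for u
        using that \<open>\<And>j. j < m \<Longrightarrow> A' j \<subseteq> A j - {a}\<close>[OF \<open>j < m\<close>] by blast
    qed
  qed (use Cons.prems(3,4) in auto)
  show ?case
  proof (cases "\<exists>j<m. a \<in> A j")
    case True
    then obtain j where j: "j < m" "a \<in> A j"
      by blast
    have others: "\<And>j'. j' < m \<Longrightarrow> j' \<noteq> j \<Longrightarrow> a \<notin> A j'"
      using Cons.prems(5) j by blast
    have least: "p a \<le> p l" if "l \<in> A j" for l
    proof -
      have "sorted_wrt (\<lambda>u v. p u \<le> p v) (a # filter (\<lambda>u. u \<in> A j) L)"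
        using Cons.prems(6)[OF j(1)] j(2) by simp
      moreover have "l = a \<or> l \<in> set (filter (\<lambda>u. u \<in> A j) L)"
        using that Cons.prems(2)[OF j(1)] by auto
      ultimately show ?thesis
        by auto
    qed
    have nonneg: "0 \<le> p l" if "l \<in> A j" for l
      using that Cons.prems(1) Cons.prems(2)[OF j(1)] Cons.prems(3) by auto
    have sub: "(A(j := A j - {a})) j' \<subseteq> A j' - {a}" "(A(j := {})) j' \<subseteq> A j' - {a}"
      if "j' < m" for j'
      using others[OF that] by auto
    have "expect n p (\<lambda>x. of_bool (settled m r A d (chain (a # L)) x))
        = p a * expect n (p(a := 1))
            (\<lambda>x. of_bool (settled m r (A(j := A j - {a})) (d(j := Suc (d j))) (chain L) x))
          + (1 - p a) * of_bool (Suc (d j) \<le> r) * expect n (p(a := 0))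
            (\<lambda>x. of_bool (settled m r (A(j := {})) (d(j := 0)) (chain L) x))"
      unfolding chain.simps by (rule expect_settled_Node_in[where A = A, OF \<open>a < n\<close> j others])
    also have "\<dots> = p a * settle_prob m r (p(a := 1)) (A(j := A j - {a})) (d(j := Suc (d j)))
          + (1 - p a) * of_bool (Suc (d j) \<le> r) * settle_prob m r (p(a := 0)) (A(j := {})) (d(j := 0))"
      using IH[of 1 "A(j := A j - {a})"] IH[of 0 "A(j := {})"] sub by simp
    also have "\<dots> = settle_prob m r p A d"
      by (rule settle_prob_Node_in_least[where A = A and p = p and i = a, OF j others finite_A[OF j(1)] least nonneg])
    finally show ?thesis .
  next
    case False
    then have out: "\<And>j. j < m \<Longrightarrow> a \<notin> A j"
      by blast
    have "expect n p (\<lambda>x. of_bool (settled m r A d (chain (a # L)) x))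
        = p a * expect n (p(a := 1)) (\<lambda>x. of_bool (settled m r A d (chain L) x))
          + (1 - p a) * expect n (p(a := 0)) (\<lambda>x. of_bool (settled m r A d (chain L) x))"
      unfolding chain.simps by (rule expect_settled_Node_out[OF \<open>a < n\<close> out])
    also have "\<dots> = p a * settle_prob m r (p(a := 1)) A d + (1 - p a) * settle_prob m r (p(a := 0)) A d"
      using IH[of 1 A] IH[of 0 A] out Cons.prems(2) by (simp add: subset_Diff_insert)
    also have "\<dots> = settle_prob m r p A d"
      by (simp add: settle_prob_upd_out[OF out] algebra_simps)
    finally show ?thesis .
  qed
qed

section \<open>Costs and determinacy\<close>

lemma finite_tested [simp]: "finite (tested t x)"
  by (induction t) auto

lemma card_tested_le_tree_cost: "real (card (tested t x)) \<le> tree_cost (\<lambda>_. 1) t x"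
proof (induction t)
  case (Node i l r)
  have "card (tested (Node i l r) x) \<le> Suc (card (tested (if x i then r else l) x))"
    by (simp add: card_insert_if)
  then show ?case
    using Node by (cases "x i") auto
qed simp

lemma term_time_le:
  "finite A \<Longrightarrow> term_time A t x
     \<le> (if \<exists>i\<in>A \<inter> tested t x. \<not> x i then card (A \<inter> tested t x) else card A)"
proof (induction t arbitrary: A)
  case (Node i l r)
  show ?case
  proof (cases "i \<in> A")
    case iA: True
    show ?thesis
    proof (cases "x i")
      case True
      have IH: "term_time (A - {i}) r x \<le> (if \<exists>i'\<in>(A - {i}) \<inter> tested r x. \<not> x i'
          then card ((A - {i}) \<inter> tested r x) else card (A - {i}))"
        using Node.IH(2) Node.prems by simp
      have "A \<inter> tested (Node i l r) x = insert i ((A - {i}) \<inter> tested r x)"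
        using True iA by auto
      then have card_tested: "card (A \<inter> tested (Node i l r) x) = Suc (card ((A - {i}) \<inter> tested r x))"
        using Node.prems by simp
      have card_A: "card A = Suc (card (A - {i}))"
        using Node.prems iA by (rule card_Suc_Diff1[symmetric])
      have falsified: "(\<exists>i'\<in>A \<inter> tested (Node i l r) x. \<not> x i')
          \<longleftrightarrow> (\<exists>i'\<in>(A - {i}) \<inter> tested r x. \<not> x i')"
        using True by auto
      have "term_time A (Node i l r) x = Suc (term_time (A - {i}) r x)"
        using True iA by simp
      then show ?thesis
        using IH unfolding falsified card_tested card_A by (simp only: Suc_le_mono if_distrib)
    next
      case False
      have "0 < card (A \<inter> tested (Node i l r) x)"
        using Node.prems iA by (auto simp: card_gt_0_iff)
      then show ?thesis
        using iA False by auto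
    qed
  next
    case False
    then have "A \<inter> tested (Node i l r) x = A \<inter> tested (if x i then r else l) x"
      and "term_time A (Node i l r) x = term_time A (if x i then r else l) x"
      by auto
    moreover have "term_time A (if x i then r else l) x
        \<le> (if \<exists>i'\<in>A \<inter> tested (if x i then r else l) x. \<not> x i'
            then card (A \<inter> tested (if x i then r else l) x) else card A)"
      using Node.IH(1)[OF Node.prems] Node.IH(2)[OF Node.prems]
      by (cases "x i") (simp_all only: if_True if_False)
    ultimately show ?thesis
      by (simp only:)
  qed
qed simp

lemma term_time_chain_falsified:
  "distinct L \<Longrightarrow> finite A \<Longrightarrow> term_time A (chain L) x \<le> r \<Longrightarrow> r < card A
    \<Longrightarrow> \<exists>i\<in>set (take r (filter (\<lambda>a. a \<in> A) L)). \<not> x i"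
proof (induction L arbitrary: A r)
  case (Cons a L)
  have "a \<notin> set L" "distinct L"
    using Cons.prems by auto
  show ?case
  proof (cases "a \<in> A")
    case aA: True
    show ?thesis
    proof (cases "x a")
      case True
      then obtain r' where r': "r = Suc r'" "term_time (A - {a}) (chain L) x \<le> r'"
        using Cons.prems(3) aA by (cases r) auto
      moreover have "r' < card (A - {a})"
        using Cons.prems(2,4) aA r'(1) by simp
      ultimately obtain i where i: "i \<in> set (take r' (filter (\<lambda>u. u \<in> A - {a}) L))" "\<not> x i"
        using Cons.IH[OF \<open>distinct L\<close>] Cons.prems(2) by blast
      have "filter (\<lambda>u. u \<in> A - {a}) L = filter (\<lambda>u. u \<in> A) L"
        using \<open>a \<notin> set L\<close> by (intro filter_cong) auto
      then show ?thesis
        using i aA r'(1) by auto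
    next
      case False
      then have "a \<in> set (take r (filter (\<lambda>u. u \<in> A) (a # L)))"
        using Cons.prems(3) aA by (cases r) auto
      then show ?thesis
        using False by blast
    qed
  next
    case False
    then show ?thesis
      using Cons.IH[OF \<open>distinct L\<close> Cons.prems(2) _ Cons.prems(4)] Cons.prems(3) by auto
  qed
qed simp

lemma determined_mono: "determined f n S x \<Longrightarrow> S \<subseteq> S' \<Longrightarrow> determined f n S' x"
  unfolding determined_def by blast

lemma determined_all: "x \<in> Inputs n \<Longrightarrow> determined f n {..<n} x"
proof -
  assume x: "x \<in> Inputs n"
  have "x' = x" if "x' \<in> Inputs n" "\<forall>i\<in>{..<n}. x' i = x i" for x'
  proof
    fix i
    show "x' i = x i"
      using x that by (cases "i < n") (auto simp: Inputs_def)
  qed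
  then show ?thesis
    unfolding determined_def by auto
qed

section \<open>Round-robin schedules\<close>

definition round_robin :: "nat \<Rightarrow> nat \<Rightarrow> (nat \<Rightarrow> nat list) \<Rightarrow> nat list" where
  "round_robin m k L = concat (map (\<lambda>r. map (\<lambda>j. L j ! r) [0..<m]) [0..<k])"

lemma length_round_robin: "length (round_robin m k L) = k * m"
  unfolding round_robin_def by (simp add: length_concat comp_def sum_list_triv)

lemma take_round_robin: "r \<le> k \<Longrightarrow> take (m * r) (round_robin m k L) = round_robin m r L"
proof -
  assume "r \<le> k"
  then have "[0..<k] = [0..<r] @ [r..<k]"
    using upt_add_eq_append[of 0 r "k - r"] by simp
  then have "round_robin m k L = round_robin m r L @ concat (map (\<lambda>r. map (\<lambda>j. L j ! r) [0..<m]) [r..<k])"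
    unfolding round_robin_def by simp
  then show ?thesis
    using length_round_robin[of m r L] by (simp add: mult.commute)
qed

lemma set_round_robin: "set (round_robin m r L) = {L j ! r' | j r'. j < m \<and> r' < r}"
  unfolding round_robin_def by fastforce

lemma filter_upt_eq_single: "j < m \<Longrightarrow> filter (\<lambda>j'. j' = j) [0..<m] = [j]"
proof -
  assume "j < m"
  then have "[0..<m] = [0..<j] @ j # [Suc j..<m]"
    using upt_add_eq_append[of 0 j "m - j"] by (simp add: upt_rec)
  then show ?thesis
    by (simp add: filter_empty_conv)
qed

lemma filter_round_robin:
  assumes "j < m" "length (L j) = k"
    and in_T: "\<And>j r. j < m \<Longrightarrow> r < k \<Longrightarrow> L j ! r \<in> T j"
    and disjoint: "\<And>j j'. j < m \<Longrightarrow> j' < m \<Longrightarrow> j \<noteq> j' \<Longrightarrow> T j \<inter> T j' = {}"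
  shows "filter (\<lambda>a. a \<in> T j) (round_robin m k L) = L j"
proof -
  have "filter (\<lambda>a. a \<in> T j) (map (\<lambda>j'. L j' ! r) [0..<m]) = [L j ! r]" if "r < k" for r
  proof -
    have "L j' ! r \<in> T j \<longleftrightarrow> j' = j" if "j' < m" for j'
      using in_T[OF that \<open>r < k\<close>] in_T[OF \<open>j < m\<close> \<open>r < k\<close>] disjoint[OF that \<open>j < m\<close>] by blast
    then have "filter (\<lambda>j'. L j' ! r \<in> T j) [0..<m] = filter (\<lambda>j'. j' = j) [0..<m]"
      by (intro filter_cong) auto
    then show ?thesis
      using filter_upt_eq_single[OF \<open>j < m\<close>] by (simp add: filter_map comp_def)
  qed
  then have "filter (\<lambda>a. a \<in> T j) (round_robin m k L) = concat (map (\<lambda>r. [L j ! r]) [0..<k])"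
    unfolding round_robin_def filter_concat map_map comp_def by (intro arg_cong[where f = concat] map_cong) auto
  also have "\<dots> = L j"
    using assms(2) map_nth[of "L j"] by simp
  finally show ?thesis .
qed

section \<open>Read-once DNFs with terms of equal size\<close>

lemma determined_read_once_dnf_false:
  assumes "\<And>j. j < m \<Longrightarrow> \<exists>i\<in>T j \<inter> S. \<not> x i"
  shows "determined (read_once_dnf m T) n S x"
  unfolding determined_def read_once_dnf_def using assms by fastforce

locale uniform_read_once_dnf =
  fixes m k n :: nat and T :: "nat \<Rightarrow> nat set" and p :: "nat \<Rightarrow> real"
  assumes disjoint: "\<And>j j'. j < m \<Longrightarrow> j' < m \<Longrightarrow> j \<noteq> j' \<Longrightarrow> T j \<inter> T j' = {}"
    and cover: "(\<Union>j<m. T j) = {..<n}"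
    and card_T: "\<And>j. j < m \<Longrightarrow> card (T j) = k"
    and prob: "\<And>i. i < n \<Longrightarrow> 0 \<le> p i \<and> p i \<le> 1"
begin

abbreviation dnf :: "(nat \<Rightarrow> bool) \<Rightarrow> bool" where
  "dnf \<equiv> read_once_dnf m T"

lemma T_subset: "j < m \<Longrightarrow> T j \<subseteq> {..<n}"
  using cover by blast

lemma finite_T: "j < m \<Longrightarrow> finite (T j)"
  using T_subset finite_subset by blast

lemma n_eq: "n = k * m"
proof -
  have "n = card (\<Union>j<m. T j)"
    using cover by simp
  also have "\<dots> = (\<Sum>j<m. card (T j))"
    using finite_T disjoint by (intro card_UN_disjoint) auto
  also have "\<dots> = k * m"
    by (simp add: card_T)
  finally show ?thesis .
qed

text \<open>If no tested variable falsifies term \<open>j\<close>, the leaf certifies \<open>dnf x\<close>, which needs all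
  \<open>k\<close> variables of some term to be tested.\<close>
lemma term_time_le_tested:
  assumes "valid_tree dnf n t" "x \<in> Inputs n" "j < m"
  shows "term_time (T j) t x \<le> card (tested t x)"
proof (cases "\<exists>i\<in>T j \<inter> tested t x. \<not> x i")
  case True
  then have "term_time (T j) t x \<le> card (T j \<inter> tested t x)"
    using term_time_le[OF finite_T[OF assms(3)], of t x] by simp
  also have "\<dots> \<le> card (tested t x)"
    by (intro card_mono) auto
  finally show ?thesis .
next
  case False
  then have "term_time (T j) t x \<le> k"
    using term_time_le[OF finite_T[OF assms(3)], of t x] card_T[OF assms(3)] by simp
  have det: "determined dnf n (tested t x) x"
    using assms(1,2) unfolding valid_tree_def by blast
  define x1 where "x1 i = (i \<in> T j \<or> x i)" for i
  have "x1 \<in> Inputs n"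
    using assms(2) T_subset[OF assms(3)] unfolding x1_def Inputs_def by auto
  moreover have "dnf x1"
    unfolding read_once_dnf_def x1_def using assms(3) by auto
  ultimately have "dnf x"
    using det False unfolding determined_def x1_def by auto
  define x2 where "x2 i = (i \<in> tested t x \<and> x i)" for i
  have "x2 \<in> Inputs n"
    using assms(2) unfolding x2_def Inputs_def by auto
  then have "dnf x2"
    using det \<open>dnf x\<close> unfolding determined_def x2_def by auto
  then obtain j' where "j' < m" "T j' \<subseteq> tested t x"
    unfolding read_once_dnf_def x2_def by blast
  then have "k \<le> card (tested t x)"
    using card_T card_mono[OF finite_tested] by metis
  then show ?thesis
    using \<open>term_time (T j) t x \<le> k\<close> by simp
qed

lemma unsettled_rounds_le_tree_cost:
  assumes "valid_tree dnf n t" "x \<in> Inputs n"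
  shows "(\<Sum>r<k. of_bool (\<not> settled m r T (\<lambda>_. 0) t x) :: real) \<le> tree_cost (\<lambda>_. 1) t x"
proof -
  have "{..<k} \<inter> {r. \<not> settled m r T (\<lambda>_. 0) t x} \<subseteq> {..<card (tested t x)}"
  proof
    fix r assume "r \<in> {..<k} \<inter> {r. \<not> settled m r T (\<lambda>_. 0) t x}"
    then obtain j where "j < m" "r < term_time (T j) t x"
      by (auto simp: settled_def not_le)
    then show "r \<in> {..<card (tested t x)}"
      using term_time_le_tested[OF assms] by fastforce
  qed
  then have "card ({..<k} \<inter> {r. \<not> settled m r T (\<lambda>_. 0) t x}) \<le> card (tested t x)"
    by (metis card_lessThan card_mono finite_lessThan)
  then show ?thesis
    using card_tested_le_tree_cost[of t x] by simp
qed

lemma settle_prob_sum_le_cost_adaptive: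
  assumes "valid_tree dnf n t"
  shows "(\<Sum>r<k. 1 - settle_prob m r p T (\<lambda>_. 0)) \<le> cost_adaptive dnf n (\<lambda>_. 1) p t"
proof -
  have "(\<Sum>r<k. 1 - settle_prob m r p T (\<lambda>_. 0))
      \<le> (\<Sum>r<k. 1 - expect n p (\<lambda>x. of_bool (settled m r T (\<lambda>_. 0) t x)))"
    using expect_settled_le[OF prob] finite_T T_subset disjoint by (intro sum_mono) fastforce
  also have "\<dots> = expect n p (\<lambda>x. \<Sum>r<k. of_bool (\<not> settled m r T (\<lambda>_. 0) t x))"
    by (simp add: expect_sum of_bool_not_iff expect_diff)
  also have "\<dots> \<le> expect n p (tree_cost (\<lambda>_. 1) t)"
    by (rule expect_mono[OF prob unsettled_rounds_le_tree_cost[OF assms]])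
  also have "\<dots> = cost_adaptive dnf n (\<lambda>_. 1) p t"
    unfolding cost_adaptive_def expect_def ..
  finally show ?thesis .
qed

definition term_order :: "nat \<Rightarrow> nat list" where
  "term_order j = sort_key p (sorted_list_of_set (T j))"

definition schedule :: "nat list" where
  "schedule = round_robin m k term_order"

lemma set_term_order: "j < m \<Longrightarrow> set (term_order j) = T j"
  unfolding term_order_def using finite_T by simp

lemma length_term_order: "j < m \<Longrightarrow> length (term_order j) = k"
  unfolding term_order_def using card_T by (simp add: length_sort)

lemma filter_schedule: "j < m \<Longrightarrow> filter (\<lambda>a. a \<in> T j) schedule = term_order j"
  unfolding schedule_def
proof (rule filter_round_robin)
  show "term_order j' ! r \<in> T j'" if "j' < m" "r < k" for j' r
    using nth_mem[of r "term_order j'"] that set_term_order length_term_order by simp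
qed (use length_term_order disjoint in auto)

lemma set_schedule: "set schedule = {..<n}"
proof
  show "set schedule \<subseteq> {..<n}"
    unfolding schedule_def set_round_robin using T_subset length_term_order set_term_order
    by (force dest: nth_mem)
  show "{..<n} \<subseteq> set schedule"
  proof
    fix i assume "i \<in> {..<n}"
    then obtain j where j: "j < m" "i \<in> set (term_order j)"
      using cover set_term_order by blast
    then obtain r where "r < k" "i = term_order j ! r"
      by (metis in_set_conv_nth length_term_order)
    then show "i \<in> set schedule"
      unfolding schedule_def set_round_robin using j by blast
  qed
qed

lemma is_perm_schedule: "is_perm n schedule"
  unfolding is_perm_def using set_schedule length_round_robin[of m k term_order] n_eq
  by (simp add: card_distinct schedule_def)

lemma expect_settled_schedule:
  "expect n p (\<lambda>x. of_bool (settled m r T d (chain schedule) x)) = settle_prob m r p T d"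
proof (rule expect_settled_chain[OF prob])
  show "distinct schedule"
    using is_perm_schedule by (simp add: is_perm_def)
  show "sorted_wrt (\<lambda>u v. p u \<le> p v) (filter (\<lambda>u. u \<in> T j) schedule)" if "j < m" for j
    unfolding filter_schedule[OF that] term_order_def using sorted_sort_key[of p] by (simp add: sorted_map)
qed (use set_schedule T_subset disjoint in auto)
lemma determined_take_schedule:
  assumes "x \<in> Inputs n" "settled m r T (\<lambda>_. 0) (chain schedule) x \<or> k \<le> r"
  shows "determined dnf n (set (take (m * r) schedule)) x"
proof (cases "k \<le> r")
  case True
  then have "length schedule \<le> m * r"
    unfolding schedule_def length_round_robin by simp
  then show ?thesis
    using determined_all[OF assms(1)] set_schedule by simp
next
  case False
  then have settled: "settled m r T (\<lambda>_. 0) (chain schedule) x" and "r < k"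
    using assms(2) by auto
  show ?thesis
  proof (rule determined_read_once_dnf_false)
    fix j assume "j < m"
    have "distinct schedule"
      using is_perm_schedule by (simp add: is_perm_def)
    moreover have "term_time (T j) (chain schedule) x \<le> r"
      using settled \<open>j < m\<close> by (simp add: settled_def)
    moreover have "r < card (T j)"
      using \<open>r < k\<close> card_T[OF \<open>j < m\<close>] by simp
    ultimately have "\<exists>i\<in>set (take r (filter (\<lambda>a. a \<in> T j) schedule)). \<not> x i"
      by (rule term_time_chain_falsified[OF _ finite_T[OF \<open>j < m\<close>]])
    then obtain i where i: "i \<in> set (take r (term_order j))" "\<not> x i"
      unfolding filter_schedule[OF \<open>j < m\<close>] by blast
    then obtain r' where "r' < r" "i = term_order j ! r'"
      by (auto simp: in_set_conv_nth)
    then have "i \<in> set (take (m * r) schedule)"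
      unfolding schedule_def take_round_robin[OF less_imp_le[OF \<open>r < k\<close>]] set_round_robin
      using \<open>j < m\<close> by auto
    moreover have "i \<in> T j"
      using i(1) set_take_subset[of r "term_order j"] set_term_order[OF \<open>j < m\<close>] by auto
    ultimately show "\<exists>i\<in>T j \<inter> set (take (m * r) schedule). \<not> x i"
      using i(2) by blast
  qed
qed

text \<open>The schedule stops at the latest after the first settled round.\<close>
lemma stop_index_schedule_le:
  assumes "x \<in> Inputs n"
  shows "stop_index dnf n schedule x \<le> m * card ({..<k} \<inter> {r. \<not> settled m r T (\<lambda>_. 0) (chain schedule) x})"
    (is "_ \<le> m * card ?U")
proof -
  define r0 where "r0 = (LEAST r. settled m r T (\<lambda>_. 0) (chain schedule) x \<or> k \<le> r)"
  have "settled m r0 T (\<lambda>_. 0) (chain schedule) x \<or> k \<le> r0"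
    unfolding r0_def by (rule LeastI[of _ k]) simp
  then have "determined dnf n (set (take (m * r0) schedule)) x"
    by (rule determined_take_schedule[OF assms])
  moreover have "{..<r0} \<subseteq> ?U"
    unfolding r0_def using not_less_Least by fastforce
  then have "r0 \<le> card ?U"
    by (metis card_lessThan card_mono finite_Int finite_lessThan)
  then have "set (take (m * r0) schedule) \<subseteq> set (take (m * card ?U) schedule)"
    by (intro set_take_subset_set_take) simp
  ultimately have "determined dnf n (set (take (m * card ?U) schedule)) x"
    by (rule determined_mono)
  then show ?thesis
    unfolding stop_index_def by (rule Least_le)
qed

lemma cost_schedule_le:
  "cost_nonadaptive dnf n (\<lambda>_. 1) p schedule \<le> real m * (\<Sum>r<k. 1 - settle_prob m r p T (\<lambda>_. 0))"
proof -
  have "cost_nonadaptive dnf n (\<lambda>_. 1) p schedule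
      = expect n p (\<lambda>x. real (length (take (stop_index dnf n schedule x) schedule)))"
    unfolding cost_nonadaptive_def expect_def by (simp add: sum_list_triv)
  also have "\<dots> \<le> expect n p (\<lambda>x. real m * (\<Sum>r<k. of_bool (\<not> settled m r T (\<lambda>_. 0) (chain schedule) x)))"
  proof (rule expect_mono[OF prob])
    fix x assume "x \<in> Inputs n"
    then show "real (length (take (stop_index dnf n schedule x) schedule))
        \<le> real m * (\<Sum>r<k. of_bool (\<not> settled m r T (\<lambda>_. 0) (chain schedule) x))"
      using stop_index_schedule_le[of x] by (simp flip: of_nat_mult)
  qed
  also have "\<dots> = real m * (\<Sum>r<k. 1 - settle_prob m r p T (\<lambda>_. 0))"
    by (simp add: expect_cmult expect_sum of_bool_not_iff expect_diff expect_settled_schedule)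
  finally show ?thesis .
qed

lemma settle_prob_sum_le_OPT_A: "(\<Sum>r<k. 1 - settle_prob m r p T (\<lambda>_. 0)) \<le> OPT_A dnf n (\<lambda>_. 1) p"
  unfolding OPT_A_def
proof (rule cInf_greatest)
  have "valid_tree dnf n (chain schedule)"
    unfolding valid_tree_def tested_chain set_schedule using determined_all by blast
  then show "{cost_adaptive dnf n (\<lambda>_. 1) p t |t. valid_tree dnf n t} \<noteq> {}"
    by blast
qed (use settle_prob_sum_le_cost_adaptive in blast)

theorem exists_nonadaptive_le_m_OPT_A:
  "\<exists>\<sigma>. is_perm n \<sigma> \<and> cost_nonadaptive dnf n (\<lambda>_. 1) p \<sigma> \<le> real m * OPT_A dnf n (\<lambda>_. 1) p"
proof (intro exI conjI)
  show "is_perm n schedule"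
    by (rule is_perm_schedule)
  have "real m * (\<Sum>r<k. 1 - settle_prob m r p T (\<lambda>_. 0)) \<le> real m * OPT_A dnf n (\<lambda>_. 1) p"
    using settle_prob_sum_le_OPT_A by (rule mult_left_mono) simp
  with cost_schedule_le show "cost_nonadaptive dnf n (\<lambda>_. 1) p schedule \<le> real m * OPT_A dnf n (\<lambda>_. 1) p"
    by (rule order_trans)
qed

end

theorem lemma2:
  fixes n m :: nat and T :: "nat \<Rightarrow> nat set" and p :: "nat \<Rightarrow> real"
  assumes m_pos: "m > 0"
    and disj: "\<And>j j'. j < m \<Longrightarrow> j' < m \<Longrightarrow> j \<noteq> j' \<Longrightarrow> T j \<inter> T j' = {}"
    and cover: "(\<Union>j<m. T j) = {..<n}"
    and size: "\<And>j. j < m \<Longrightarrow> card (T j) * m = n"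
    and p: "\<And>i. i < n \<Longrightarrow> 0 < p i \<and> p i < 1"
  shows "\<exists>\<sigma>. is_perm n \<sigma> \<and>
           cost_nonadaptive (read_once_dnf m T) n (\<lambda>_. 1) p \<sigma>
             \<le> real m * OPT_A (read_once_dnf m T) n (\<lambda>_. 1) p"
proof -
  interpret uniform_read_once_dnf m "card (T 0)" n T p
  proof
    show "card (T j) = card (T 0)" if "j < m" for j
    proof -
      have "card (T j) * m = card (T 0) * m"
        using size[OF that] size[OF m_pos] by simp
      then show ?thesis
        using m_pos by simp
    qed
    show "0 \<le> p i \<and> p i \<le> 1" if "i < n" for i
      using p[OF that] by simp
  qed (use disj cover in auto)
  show ?thesis
    by (rule exists_nonadaptive_le_m_OPT_A)
qed

end
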